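(* Let $\mathbf a,\mathbf b\in\mathbb Z^2$ be arbitrary integral vectors and put $B=|\mathbf a\times\mathbf b|$. Define the integers $$B_0=-B,\quad B_1=B+\|\mathbf a\|^2,\quad B_2=B+\|\mathbf b\|^2,\quad B_{3,4}=B+\|\mathbf a\pm\mathbf b\|^2=B+\|\mathbf a\|^2+\|\mathbf b\|^2\pm2\,\mathbf a\cdot\mathbf b .$$ Then $\mathbf a,\mathbf b$ determine an everted Descartes configuration of disks $D_0,D_1,D_2,D_3$ with curvatures $(B_0,B_1,B_2,B_3)$ (and likewise, the conjugate one with $B_4$ in place of $B_3$), in which $\mathbf a=\mathrm{spin}(D_0,D_1)$ and $\mathbf b=\mathrm{spin}(D_0,D_2)$; consequently the Apollonian packing generated by it is integral. Moreover, for every vector $\mathbf v=\alpha\mathbf a+\beta\mathbf b$ with $\alpha,\beta\in\mathbb Z$, $\gcd(\alpha,\beta)=1$, there is a disk in the major corona (the set of disks of the packing tangent to $D_0$) with curvature $$B_{\mathbf v}=B+\|\mathbf v\|^2 .$$ If $\mathbf v,\mathbf w$ are two such linear combinations with $\mathbf v\times\mathbf w=\pm B$, then the disks of curvatures $B_0,B_{\mathbf v},B_{\mathbf w}$ form a tricycle.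
   Context: A disk is the interior (inner, positive curvature $1/r$) or exterior (outer, negative curvature $-1/r$, signed radius $-r$) of a circle of radius $r$; half-planes have curvature $0$. A tricycle is a configuration of three mutually tangent, non-overlapping disks; a Descartes configuration is four mutually tangent non-overlapping disks; it is everted if it contains a disk of negative (or zero) curvature, that disk being the major disk. Every tricycle is completed uniquely to an Apollonian packing by recursively inscribing new disks in the curvilinear triangular gaps; it is integral if all curvatures are integers. Tangency spinor: identifying the plane with $\mathbb C$, for tangent disks $A,B$ with centers $c_A,c_B$ and signed radii $r_A,r_B$, $\mathrm{spin}(A,B)=\pm\sqrt{(c_B-c_A)/(r_Ar_B)}$, regarded as a vector in $\mathbb R^2$ (defined up to sign). For $\mathbf a=(x,y)^T,\mathbf b=(x',y')^T$: $\mathbf a\cdot\mathbf b=xx'+yy'$, $\mathbf a\times\mathbf b=xy'-x'y$, $\|\mathbf a\|^2=\mathbf a\cdot\mathbf a$. *)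

theory Defs
  imports "HOL-Analysis.Analysis"
begin

text \<open>Circ c r: disk bounded by the circle of centre c and radius |r|, with signed radius r:
  r > 0 is the closed interior, r < 0 the closed exterior (curvature 1/r < 0).\<close>

datatype gdisk = Circ complex real | HPlane complex real

fun wf_disk :: "gdisk \<Rightarrow> bool" where
  "wf_disk (Circ c r) \<longleftrightarrow> r \<noteq> 0"
| "wf_disk (HPlane u t) \<longleftrightarrow> cmod u = 1"

fun disk_set :: "gdisk \<Rightarrow> complex set" where
  "disk_set (Circ c r) = (if r > 0 then cball c r else {z. dist z c \<ge> - r})"
| "disk_set (HPlane u t) = {z. Re (cnj u * z) \<le> t}"

fun curv :: "gdisk \<Rightarrow> real" where
  "curv (Circ c r) = 1 / r"
| "curv (HPlane u t) = 0"

fun is_half :: "gdisk \<Rightarrow> bool" where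
  "is_half (Circ c r) = False"
| "is_half (HPlane u t) = True"

text \<open>Tangent and non-overlapping: interiors disjoint and the disks touch in exactly one point;
  two (necessarily parallel) half-planes with disjoint interiors count as tangent at infinity.\<close>
definition tangent :: "gdisk \<Rightarrow> gdisk \<Rightarrow> bool" where
  "tangent D E \<longleftrightarrow> wf_disk D \<and> wf_disk E \<and>
     interior (disk_set D) \<inter> interior (disk_set E) = {} \<and>
     (if is_half D \<and> is_half E then True else (\<exists>!z. z \<in> disk_set D \<inter> disk_set E))"

definition tricycle :: "gdisk \<Rightarrow> gdisk \<Rightarrow> gdisk \<Rightarrow> bool" where
  "tricycle A B C \<longleftrightarrow> tangent A B \<and> tangent A C \<and> tangent B C"

definition descartes :: "gdisk \<Rightarrow> gdisk \<Rightarrow> gdisk \<Rightarrow> gdisk \<Rightarrow> bool" where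
  "descartes A B C D \<longleftrightarrow> tricycle A B C \<and> tangent A D \<and> tangent B D \<and> tangent C D"

definition everted :: "gdisk \<Rightarrow> gdisk \<Rightarrow> gdisk \<Rightarrow> gdisk \<Rightarrow> bool" where
  "everted A B C D \<longleftrightarrow> descartes A B C D \<and>
     (curv A \<le> 0 \<or> curv B \<le> 0 \<or> curv C \<le> 0 \<or> curv D \<le> 0)"

fun is_spin :: "gdisk \<Rightarrow> gdisk \<Rightarrow> complex \<Rightarrow> bool" where
  "is_spin (Circ c1 r1) (Circ c2 r2) s \<longleftrightarrow> s\<^sup>2 = (c2 - c1) / complex_of_real (r1 * r2)"
| "is_spin _ _ _ \<longleftrightarrow> False"

text \<open>Descartes configurations reachable from q by (reordering and) replacing one disk by the
  other disk completing the remaining tricycle, i.e. inscribing disks into the gaps.\<close>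
inductive_set apoll_configs ::
  "gdisk \<times> gdisk \<times> gdisk \<times> gdisk \<Rightarrow> (gdisk \<times> gdisk \<times> gdisk \<times> gdisk) set" for q where
  start: "q \<in> apoll_configs q"
| swap: "(A, B, C, D) \<in> apoll_configs q \<Longrightarrow> (B, A, C, D) \<in> apoll_configs q"
| rot: "(A, B, C, D) \<in> apoll_configs q \<Longrightarrow> (B, C, D, A) \<in> apoll_configs q"
| flip: "(A, B, C, D) \<in> apoll_configs q \<Longrightarrow> descartes A B C E \<Longrightarrow> E \<noteq> D
          \<Longrightarrow> (A, B, C, E) \<in> apoll_configs q"

definition apollonian_packing :: "gdisk \<times> gdisk \<times> gdisk \<times> gdisk \<Rightarrow> gdisk set" where
  "apollonian_packing q = {X. \<exists>A B C D. (A, B, C, D) \<in> apoll_configs q \<and> X \<in> {A, B, C, D}}"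

definition integral_packing :: "gdisk set \<Rightarrow> bool" where
  "integral_packing P \<longleftrightarrow> (\<forall>X\<in>P. curv X \<in> \<int>)"

fun vcross :: "int \<times> int \<Rightarrow> int \<times> int \<Rightarrow> int" where
  "vcross (x, y) (x', y') = x * y' - x' * y"

fun vdot :: "int \<times> int \<Rightarrow> int \<times> int \<Rightarrow> int" where
  "vdot (x, y) (x', y') = x * x' + y * y'"

definition vnorm2 :: "int \<times> int \<Rightarrow> int" where
  "vnorm2 v = vdot v v"

fun vlin :: "int \<Rightarrow> int \<Rightarrow> int \<times> int \<Rightarrow> int \<times> int \<Rightarrow> int \<times> int" where
  "vlin \<alpha> \<beta> (x, y) (x', y') = (\<alpha> * x + \<beta> * x', \<alpha> * y + \<beta> * y')"

fun vcomplex :: "int \<times> int \<Rightarrow> complex" where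
  "vcomplex (x, y) = Complex (of_int x) (of_int y)"

end

theory Submission
  imports Defs
begin

text \<open>
  A disk is encoded by its augmented curvature-centre coordinates, in which tangency of two
  disks reads as Lorentz product \<open>-1\<close>. Hence the two disks completing a tricycle to a
  Descartes configuration are reflections of each other, their curvatures add up to
  \<open>2 (b\<^sub>1 + b\<^sub>2 + b\<^sub>3)\<close>, and integrality propagates through the
  whole packing.

  For the construction put the major disk at the origin with curvature \<open>-B\<close>,
  \<open>B = |a \<times> b|\<close>, and attach to every spinor \<open>s\<close> the disk of curvature
  \<open>B + |s|\<^sup>2\<close> whose spinor relative to the major disk is \<open>s\<close>. Two such disks
  touch as soon as \<open>|Im (conj s * t)| = B\<close>, i.e. whenever their integer coordinates with
  respect to \<open>a, b\<close> form a unimodular pair. An Apollonian flip at the major disk replaces a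
  unimodular pair \<open>(v, w)\<close> by \<open>(v, w \<plusminus> v)\<close>, so Euclid's algorithm
  reaches every primitive vector \<open>\<alpha> a + \<beta> b\<close> from the seed \<open>a, b, a + b\<close>.
\<close>

section \<open>Touching disks\<close>

lemma tangent_sym: "tangent D E \<longleftrightarrow> tangent E D"
  unfolding tangent_def by (auto simp: Int_commute)

lemma tangent_wf_disk: "tangent D E \<Longrightarrow> wf_disk D \<and> wf_disk E"
  by (simp add: tangent_def)

lemma ball_subset_interior_disk_set: "r > 0 \<Longrightarrow> ball c r \<subseteq> interior (disk_set (Circ c r))"
  by simp

lemma exterior_subset_interior_disk_set:
  assumes "r < 0"
  shows "{z. - r < dist z c} \<subseteq> interior (disk_set (Circ c r))"
proof -
  have "{z. - r < dist z c} = - cball c (- r)" by (auto simp: dist_commute)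
  then show ?thesis
    using assms by (intro interior_maximal) (auto simp: dist_commute)
qed

lemma disk_set_HPlane_inner: "disk_set (HPlane u t) = {z. inner u z \<le> t}"
  by (simp add: inner_complex_def)

lemma open_halfspace_subset_interior_disk_set:
  "{z. inner u z < t} \<subseteq> interior (disk_set (HPlane u t))"
  unfolding disk_set_HPlane_inner by (intro interior_maximal) (auto simp: open_halfspace_lt)

lemma dist_weighted_point:
  fixes c c' :: "'a::real_normed_vector"
  assumes "r \<ge> 0" "r' \<ge> 0" "r + r' > 0"
  defines "p \<equiv> c + (r / (r + r')) *\<^sub>R (c' - c)"
  shows "dist p c = r / (r + r') * dist c c'"
    and "dist p c' = r' / (r + r') * dist c c'"
proof -
  show "dist p c = r / (r + r') * dist c c'"
    using assms by (simp add: p_def dist_norm norm_minus_commute)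
  have "p - c' = (1 - r / (r + r')) *\<^sub>R (c - c')"
    by (simp add: p_def algebra_simps)
  also have "1 - r / (r + r') = r' / (r + r')"
    using assms by (simp add: field_simps)
  finally show "dist p c' = r' / (r + r') * dist c c'"
    using assms by (simp add: dist_norm)
qed

lemma touching_balls_dist:
  fixes c c' z :: "'a::real_normed_vector"
  assumes r: "r > 0" "r' > 0" and disj: "ball c r \<inter> ball c' r' = {}"
    and z: "dist z c \<le> r" "dist z c' \<le> r'"
  shows "dist c c' = r + r'"
proof -
  have "dist c c' \<le> r + r'"
    using dist_triangle[of c c' z] z by (simp add: dist_commute)
  moreover have "\<not> dist c c' < r + r'"
  proof
    assume close: "dist c c' < r + r'"
    have "r / (r + r') * dist c c' < r" "r' / (r + r') * dist c c' < r'"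
      using mult_strict_left_mono[OF close r(1)] mult_strict_left_mono[OF close r(2)] r
      by (simp_all add: field_simps distrib_left)
    then have "c + (r / (r + r')) *\<^sub>R (c' - c) \<in> ball c r \<inter> ball c' r'"
      using dist_weighted_point[of r r' c c'] r by (simp add: dist_commute)
    then show False using disj by auto
  qed
  ultimately show ?thesis by linarith
qed

lemma touching_ball_exterior_dist:
  fixes c c' z :: "'a::euclidean_space"
  assumes r: "r > 0" and disj: "ball c r \<inter> {z. R < dist z c'} = {}"
    and z: "dist z c \<le> r" "R \<le> dist z c'"
  shows "dist c c' = R - r"
proof -
  have "ball c r \<subseteq> cball c' R"
    using disj by (auto simp: dist_commute)
  then have "dist c c' + r \<le> R"
    using r by (simp add: ball_subset_cball_iff)
  moreover have "R - r \<le> dist c c'"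
    using dist_triangle[of z c' c] z by linarith
  ultimately show ?thesis by linarith
qed

lemma exteriors_intersect:
  fixes c c' :: "'a::{real_normed_vector, perfect_space}"
  shows "{z. R < dist z c} \<inter> {z. R' < dist z c'} \<noteq> {}"
proof -
  have "\<not> UNIV \<subseteq> cball c R \<union> cball c' R'"
    using bounded_subset[of "cball c R \<union> cball c' R'" UNIV] by auto
  then obtain p where "p \<notin> cball c R \<union> cball c' R'"
    by blast
  then have "p \<in> {z. R < dist z c} \<inter> {z. R' < dist z c'}"
    by (simp add: dist_commute)
  then show ?thesis by blast
qed

lemma touching_ball_halfspace:
  fixes c u z :: "'a::real_inner"
  assumes r: "r > 0" and u: "norm u = 1" and disj: "ball c r \<inter> {z. inner u z < t} = {}"
    and z: "dist z c \<le> r" "inner u z \<le> t"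
  shows "inner u c = t + r"
proof -
  have "inner u (c - z) \<le> r"
    using Cauchy_Schwarz_ineq2[of u "c - z"] u z by (simp add: dist_norm norm_minus_commute)
  then have "inner u c \<le> t + r"
    using z by (simp add: inner_diff_right)
  moreover have "r \<le> inner u c - t"
  proof (rule dense_le_bounded[OF r])
    fix w :: real assume w: "0 < w" "w < r"
    have "c - w *\<^sub>R u \<in> ball c r" using w u by (simp add: dist_norm)
    then have "c - w *\<^sub>R u \<notin> {z. inner u z < t}" using disj by blast
    then have "t \<le> inner u (c - w *\<^sub>R u)" by simp
    then show "w \<le> inner u c - t"
      using u by (simp add: inner_diff_right dot_square_norm)
  qed
  ultimately show ?thesis by linarith
qed

lemma exterior_halfspace_intersect:
  fixes c u :: "'a::real_inner"
  assumes u: "norm u = 1"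
  shows "{z. R < dist z c} \<inter> {z. inner u z < t} \<noteq> {}"
proof -
  define M where "M = \<bar>R\<bar> + \<bar>inner u c - t\<bar> + 1"
  have "inner u (c - M *\<^sub>R u) = inner u c - M"
    using u by (simp add: inner_diff_right dot_square_norm)
  then have "c - M *\<^sub>R u \<in> {z. R < dist z c} \<inter> {z. inner u z < t}"
    using u by (auto simp: M_def dist_norm)
  then show ?thesis by blast
qed

lemma disjoint_halfspaces_opposite:
  fixes u u' :: "'a::real_inner"
  assumes u: "norm u = 1" "norm u' = 1"
    and disj: "{z. inner u z < t} \<inter> {z. inner u' z < t'} = {}"
  shows "inner u u' = -1"
proof -
  have "\<bar>inner u u'\<bar> \<le> 1"
    using Cauchy_Schwarz_ineq2[of u u'] u by simp
  moreover have "\<not> inner u u' > -1"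
  proof
    assume gt: "inner u u' > -1"
    define M where "M = (\<bar>t\<bar> + \<bar>t'\<bar> + 1) / (1 + inner u u')"
    have M: "M * (1 + inner u u') = \<bar>t\<bar> + \<bar>t'\<bar> + 1"
      using gt by (simp add: M_def)
    have "inner u (- M *\<^sub>R (u + u')) = - M * (1 + inner u u')"
      "inner u' (- M *\<^sub>R (u + u')) = - M * (1 + inner u u')"
      using u by (simp_all add: inner_add_right dot_square_norm inner_commute algebra_simps)
    then have "- M *\<^sub>R (u + u') \<in> {z. inner u z < t} \<inter> {z. inner u' z < t'}"
      using M by auto
    with disj show False by blast
  qed
  ultimately show ?thesis by linarith
qed

lemma dist_triangle_eq_point:
  fixes x y z :: "'a::real_inner"
  assumes eq: "dist x y = dist x z + dist z y" and "x \<noteq> y"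
  shows "z = x + (dist x z / dist x y) *\<^sub>R (y - x)"
proof -
  have "dist x z *\<^sub>R (z - y) = dist z y *\<^sub>R (x - z)"
    using eq dist_triangle_eq[of x y z] by (simp add: dist_norm)
  then have "dist x y *\<^sub>R z = dist x y *\<^sub>R x + dist x z *\<^sub>R (y - x)"
    unfolding eq by (simp add: algebra_simps)
  moreover have "dist x y \<noteq> 0"
    using \<open>x \<noteq> y\<close> by simp
  ultimately have "dist x y *\<^sub>R (z - (x + (dist x z / dist x y) *\<^sub>R (y - x))) = 0"
    by (simp add: algebra_simps)
  with \<open>dist x y \<noteq> 0\<close> show ?thesis
    by simp
qed

lemma tangent_Circ_Circ_external:
  assumes r: "r > 0" "r' > 0" and d: "dist c c' = r + r'"
  shows "tangent (Circ c r) (Circ c' r')"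
proof -
  define z where "z = c + (r / (r + r')) *\<^sub>R (c' - c)"
  have "c \<noteq> c'" using r d by auto
  have "z \<in> cball c r" "z \<in> cball c' r'"
    using dist_weighted_point[of r r' c c'] r d by (simp_all add: z_def dist_commute)
  moreover have "y = z" if "y \<in> cball c r" "y \<in> cball c' r'" for y
  proof -
    have "dist c c' = dist c y + dist y c'" "dist c y = r"
      using that d dist_triangle[of c c' y] by (auto simp: dist_commute)
    then show ?thesis
      using dist_triangle_eq_point[of c c' y] \<open>c \<noteq> c'\<close> d by (simp add: z_def)
  qed
  moreover have "ball c r \<inter> ball c' r' = {}"
    using d by (simp add: disjoint_ballI)
  ultimately show ?thesis
    using r unfolding tangent_def by auto
qed

lemma tangent_Circ_Circ_internal:
  assumes r: "0 < r" "r < R" and d: "dist c c' = R - r"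
  shows "tangent (Circ c r) (Circ c' (- R))"
proof -
  define z where "z = c' + (R / (R - r)) *\<^sub>R (c - c')"
  have ext: "disk_set (Circ c' (- R)) = {y. R \<le> dist y c'}"
    using r by simp
  have "c \<noteq> c'" using r d by auto
  have "z - c = (R / (R - r) - 1) *\<^sub>R (c - c')"
    by (simp add: z_def algebra_simps)
  also have "R / (R - r) - 1 = r / (R - r)"
    using r by (simp add: field_simps)
  finally have "dist z c = r"
    using r d by (simp add: dist_norm)
  then have "z \<in> cball c r"
    by (simp add: dist_commute)
  moreover have "R \<le> dist z c'"
    using r d by (simp add: z_def dist_norm)
  moreover have "y = z" if y: "y \<in> cball c r" "R \<le> dist y c'" for y
  proof -
    have "dist c' y = dist c' c + dist c y" "dist c' y = R"
      using y d dist_triangle[of c' y c] by (auto simp: dist_commute)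
    moreover have "c' \<noteq> y"
      using y r by auto
    ultimately have "c = c' + ((R - r) / R) *\<^sub>R (y - c')"
      using dist_triangle_eq_point[of c' y c] d by (simp add: dist_commute)
    then have "(R / (R - r)) *\<^sub>R (c - c') = y - c'"
      using r by simp
    then show ?thesis
      by (simp add: z_def)
  qed
  moreover have "dist y c' < R" if "y \<in> ball c r" for y
    using that d dist_triangle[of y c' c] by (simp add: dist_commute)
  then have "ball c r \<inter> interior {y. R \<le> dist y c'} = {}"
    using interior_subset by force
  ultimately show ?thesis
    using r unfolding tangent_def ext by auto
qed

section \<open>Augmented curvature-centre coordinates\<close>

type_synonym acc_vec = "real \<times> real \<times> complex"

definition lorentz :: "acc_vec \<Rightarrow> acc_vec \<Rightarrow> real" where
  "lorentz v w = inner (snd (snd v)) (snd (snd w)) - (fst v * fst (snd w) + fst (snd v) * fst w) / 2"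

text \<open>Augmented curvature-centre coordinates (co-curvature, curvature, curvature times
  centre) of Lagarias, Mallows and Wilks; the co-curvature of a circle is the curvature of its
  image under inversion in the unit circle.\<close>
fun acc :: "gdisk \<Rightarrow> acc_vec" where
  "acc (Circ c r) = (((cmod c)\<^sup>2 - r\<^sup>2) / r, 1 / r, c /\<^sub>R r)"
| "acc (HPlane u t) = (- 2 * t, 0, - u)"

lemma lorentz_commute: "lorentz v w = lorentz w v"
  by (simp add: lorentz_def inner_commute algebra_simps)

lemma lorentz_add_left [simp]: "lorentz (v + w) z = lorentz v z + lorentz w z"
  by (simp add: lorentz_def inner_add_left field_simps)

lemma lorentz_scaleR_left [simp]: "lorentz (k *\<^sub>R v) z = k * lorentz v z"
  by (simp add: lorentz_def field_simps)

lemma curv_eq_acc: "curv D = fst (snd (acc D))"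
  by (cases D) simp_all

lemma acc_inj: "wf_disk D \<Longrightarrow> wf_disk E \<Longrightarrow> acc D = acc E \<Longrightarrow> D = E"
  by (cases D; cases E) auto

lemma lorentz_acc_self: "wf_disk D \<Longrightarrow> lorentz (acc D) (acc D) = 1"
  by (cases D) (simp_all add: lorentz_def dot_square_norm field_simps power2_eq_square)

lemma lorentz_acc_Circ_Circ:
  assumes "r \<noteq> 0" "r' \<noteq> 0"
  shows "lorentz (acc (Circ c r)) (acc (Circ c' r')) = (r\<^sup>2 + r'\<^sup>2 - (dist c c')\<^sup>2) / (2 * r * r')"
proof -
  have "(dist c c')\<^sup>2 = (cmod c)\<^sup>2 + (cmod c')\<^sup>2 - 2 * inner c c'"
    by (simp add: dist_norm power2_norm_eq_inner inner_diff_left inner_diff_right inner_commute)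
  moreover have "lorentz (acc (Circ c r)) (acc (Circ c' r'))
      = (r\<^sup>2 + r'\<^sup>2 - ((cmod c)\<^sup>2 + (cmod c')\<^sup>2 - 2 * inner c c')) / (2 * r * r')"
    using assms by (simp add: lorentz_def field_simps power2_eq_square)
  ultimately show ?thesis by simp
qed

lemma lorentz_acc_tangent_Circ_Circ:
  assumes tan: "tangent (Circ c r) (Circ c' r')"
  shows "lorentz (acc (Circ c r)) (acc (Circ c' r')) = -1"
proof -
  have r: "r \<noteq> 0" "r' \<noteq> 0" and
    disj: "interior (disk_set (Circ c r)) \<inter> interior (disk_set (Circ c' r')) = {}"
    using tan by (simp_all add: tangent_def)
  obtain z where z: "z \<in> disk_set (Circ c r)" "z \<in> disk_set (Circ c' r')"
    using tan unfolding tangent_def by auto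
  consider "r > 0" "r' > 0" | "r > 0" "r' < 0" | "r < 0" "r' > 0" | "r < 0" "r' < 0"
    using r by fastforce
  then have "\<bar>dist c c'\<bar> = \<bar>r + r'\<bar>"
  proof cases
    case 1
    then have "ball c r \<inter> ball c' r' = {}"
      using disj ball_subset_interior_disk_set by blast
    with 1 z show ?thesis by (simp add: touching_balls_dist dist_commute)
  next
    case 2
    then have "ball c r \<inter> {z. - r' < dist z c'} = {}"
      using disj ball_subset_interior_disk_set exterior_subset_interior_disk_set by blast
    with 2 z show ?thesis by (simp add: touching_ball_exterior_dist dist_commute)
  next
    case 3
    then have "ball c' r' \<inter> {z. - r < dist z c} = {}"
      using disj ball_subset_interior_disk_set exterior_subset_interior_disk_set by blast
    with 3 z have "dist c' c = - r - r'"
      by (intro touching_ball_exterior_dist) (simp_all add: dist_commute)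
    then show ?thesis by (simp add: dist_commute)
  next
    case 4
    then have "{z. - r < dist z c} \<inter> {z. - r' < dist z c'} = {}"
      using disj exterior_subset_interior_disk_set by blast
    then show ?thesis using exteriors_intersect by blast
  qed
  then have "(dist c c')\<^sup>2 = (r + r')\<^sup>2"
    by (metis power2_abs)
  then show ?thesis
    unfolding lorentz_acc_Circ_Circ[OF r] using r by (simp add: field_simps power2_eq_square)
qed

lemma lorentz_acc_tangent_Circ_HPlane:
  assumes tan: "tangent (Circ c r) (HPlane u t)"
  shows "lorentz (acc (Circ c r)) (acc (HPlane u t)) = -1"
proof -
  have r: "r \<noteq> 0" and u: "norm u = 1" and
    disj: "interior (disk_set (Circ c r)) \<inter> interior (disk_set (HPlane u t)) = {}"
    using tan by (simp_all add: tangent_def)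
  obtain z where z: "z \<in> disk_set (Circ c r)" "z \<in> disk_set (HPlane u t)"
    using tan unfolding tangent_def by auto
  have "r > 0"
  proof (rule ccontr)
    assume "\<not> r > 0"
    with r have "r < 0" by simp
    then have "{z. - r < dist z c} \<inter> {z. inner u z < t} = {}"
      using disj exterior_subset_interior_disk_set open_halfspace_subset_interior_disk_set by blast
    then show False using exterior_halfspace_intersect[OF u] by blast
  qed
  then have "ball c r \<inter> {z. inner u z < t} = {}"
    using disj ball_subset_interior_disk_set open_halfspace_subset_interior_disk_set by blast
  moreover have "dist z c \<le> r" "inner u z \<le> t"
    using z \<open>r > 0\<close> by (simp_all add: disk_set_HPlane_inner dist_commute del: disk_set.simps(2))
  ultimately have "inner u c = t + r"
    using touching_ball_halfspace[OF \<open>r > 0\<close> u] by blast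
  then show ?thesis
    using r by (simp add: lorentz_def inner_commute field_simps)
qed

lemma lorentz_acc_tangent_HPlane_HPlane:
  assumes tan: "tangent (HPlane u t) (HPlane u' t')"
  shows "lorentz (acc (HPlane u t)) (acc (HPlane u' t')) = -1"
proof -
  have u: "norm u = 1" "norm u' = 1" and
    disj: "interior (disk_set (HPlane u t)) \<inter> interior (disk_set (HPlane u' t')) = {}"
    using tan by (simp_all add: tangent_def)
  then have "{z. inner u z < t} \<inter> {z. inner u' z < t'} = {}"
    using open_halfspace_subset_interior_disk_set by blast
  then show ?thesis
    using disjoint_halfspaces_opposite[OF u] by (simp add: lorentz_def)
qed

lemma lorentz_acc_tangent: "tangent D E \<Longrightarrow> lorentz (acc D) (acc E) = -1"
  by (cases D; cases E) (metis lorentz_acc_tangent_Circ_Circ lorentz_acc_tangent_Circ_HPlane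
      lorentz_acc_tangent_HPlane_HPlane lorentz_commute tangent_sym)+

lemma span_lorentz_frame:
  assumes self: "lorentz a a = 1" "lorentz b b = 1" "lorentz c c = 1" "lorentz d d = 1"
    and mutual: "lorentz a b = -1" "lorentz a c = -1" "lorentz a d = -1"
      "lorentz b c = -1" "lorentz b d = -1" "lorentz c d = -1"
  shows "span {a, b, c, d} = UNIV"
proof -
  note sym = mutual[THEN trans[OF lorentz_commute]]
  have distinct: "a \<noteq> b" "a \<noteq> c" "a \<noteq> d" "b \<noteq> c" "b \<noteq> d" "c \<noteq> d"
    using self mutual by auto
  have "independent {a, b, c, d}"
    unfolding independent_explicit
  proof (intro conjI allI impI ballI)
    show "finite {a, b, c, d}" by simp
    fix f v assume "(\<Sum>v\<in>{a, b, c, d}. f v *\<^sub>R v) = 0" and v: "v \<in> {a, b, c, d}"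
    then have comb: "f a *\<^sub>R a + f b *\<^sub>R b + f c *\<^sub>R c + f d *\<^sub>R d = 0"
      using distinct by (simp add: add.assoc)
    have "lorentz (f a *\<^sub>R a + f b *\<^sub>R b + f c *\<^sub>R c + f d *\<^sub>R d) x = 0" for x
      unfolding comb by (simp add: lorentz_def)
    from this[of a] this[of b] this[of c] this[of d]
    have "f a = 0 \<and> f b = 0 \<and> f c = 0 \<and> f d = 0"
      by (simp add: self mutual sym)
    with v show "f v = 0" by auto
  qed
  moreover have "card {a, b, c, d} = 4"
    using distinct by simp
  ultimately have "UNIV \<subseteq> span {a, b, c, d}"
    by (intro card_ge_dim_independent) (simp_all add: dim_UNIV)
  then show ?thesis by auto
qed

lemma lorentz_frame_reflection:
  assumes self: "lorentz a a = 1" "lorentz b b = 1" "lorentz c c = 1" "lorentz d d = 1"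
    and mutual: "lorentz a b = -1" "lorentz a c = -1" "lorentz a d = -1"
      "lorentz b c = -1" "lorentz b d = -1" "lorentz c d = -1"
    and e: "lorentz e e = 1" "lorentz e a = -1" "lorentz e b = -1" "lorentz e c = -1"
    and "e \<noteq> d"
  shows "e = 2 *\<^sub>R (a + b + c) - d"
proof -
  note sym = mutual[THEN trans[OF lorentz_commute]]
  have "e \<in> span {a, b, c, d}"
    using span_lorentz_frame[OF self mutual] by simp
  then obtain k1 k2 k3 k4 where "e - k1 *\<^sub>R a - k2 *\<^sub>R b - k3 *\<^sub>R c - k4 *\<^sub>R d \<in> span {}"
    unfolding span_breakdown_eq by (auto simp: diff_diff_eq)
  then have k: "e = k1 *\<^sub>R a + k2 *\<^sub>R b + k3 *\<^sub>R c + k4 *\<^sub>R d"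
    by (simp add: algebra_simps)
  have "k1 - k2 - k3 - k4 = -1" "k2 - k1 - k3 - k4 = -1" "k3 - k1 - k2 - k4 = -1"
    using e(2-4) unfolding k by (simp_all add: self mutual sym)
  then have k234: "k2 = k1" "k3 = k1" "k4 = 1 - k1"
    by linarith+
  have "lorentz e d = 1 - 4 * k1"
    unfolding k by (simp add: self mutual k234)
  moreover have "lorentz e e = k1 * lorentz a e + k2 * lorentz b e + k3 * lorentz c e + k4 * lorentz d e"
    by (subst (1) k) simp
  ultimately have "1 = - 3 * k1 + (1 - k1) * (1 - 4 * k1)"
    using e e(2-4)[THEN trans[OF lorentz_commute]] lorentz_commute[of d e] by (simp add: k234)
  then have "k1 = 0 \<or> k1 = 2"
    by algebra
  moreover have "k1 \<noteq> 0"
    using \<open>e \<noteq> d\<close> by (auto simp: k k234)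
  ultimately show ?thesis
    by (simp add: k k234 algebra_simps)
qed

lemma descartes_swap: "descartes A B C D \<Longrightarrow> descartes B A C D"
  and descartes_rotate: "descartes A B C D \<Longrightarrow> descartes B C D A"
  unfolding descartes_def tricycle_def using tangent_sym by blast+

lemma descartes_flip_curv:
  assumes "descartes A B C D" "descartes A B C E" "E \<noteq> D"
  shows "curv E = 2 * (curv A + curv B + curv C) - curv D"
proof -
  have tan: "tangent A B" "tangent A C" "tangent A D" "tangent B C" "tangent B D" "tangent C D"
    "tangent E A" "tangent E B" "tangent E C"
    using assms(1,2) tangent_sym unfolding descartes_def tricycle_def by blast+
  then have wf: "wf_disk A" "wf_disk B" "wf_disk C" "wf_disk D" "wf_disk E"
    using tangent_wf_disk by blast+
  have "acc E \<noteq> acc D"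
    using acc_inj wf \<open>E \<noteq> D\<close> by blast
  then have "acc E = 2 *\<^sub>R (acc A + acc B + acc C) - acc D"
    using tan wf by (intro lorentz_frame_reflection lorentz_acc_self lorentz_acc_tangent)
  then show ?thesis
    by (simp add: curv_eq_acc)
qed

definition integral_descartes :: "gdisk \<times> gdisk \<times> gdisk \<times> gdisk \<Rightarrow> bool" where
  "integral_descartes =
    (\<lambda>(A, B, C, D). descartes A B C D \<and> curv A \<in> \<int> \<and> curv B \<in> \<int> \<and> curv C \<in> \<int> \<and> curv D \<in> \<int>)"

lemma integral_descartes_apoll_configs:
  "X \<in> apoll_configs q \<Longrightarrow> integral_descartes q \<Longrightarrow> integral_descartes X"
proof (induction rule: apoll_configs.induct)
  case (flip A B C D E)
  then have "curv E = 2 * (curv A + curv B + curv C) - curv D"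
    by (intro descartes_flip_curv) (simp_all add: integral_descartes_def)
  with flip show ?case
    by (simp add: integral_descartes_def)
qed (auto simp: integral_descartes_def intro: descartes_swap descartes_rotate)

lemma integral_packing_apollonian_packing:
  "integral_descartes q \<Longrightarrow> integral_packing (apollonian_packing q)"
  unfolding integral_packing_def apollonian_packing_def
  using integral_descartes_apoll_configs by (fastforce simp: integral_descartes_def)

section \<open>Spinor disks\<close>

text \<open>The disk whose spinor relative to \<open>Circ 0 (-1/B)\<close> is \<open>s\<close>: the spinor
  relation forces the centre to be \<open>-s\<^sup>2 r / B\<close>, and internal tangency then forces the
  radius \<open>r = 1 / (B + |s|\<^sup>2)\<close>.\<close>
definition spinor_disk :: "real \<Rightarrow> complex \<Rightarrow> gdisk" where
  "spinor_disk B s = Circ (- s\<^sup>2 / of_real (B * (B + (cmod s)\<^sup>2))) (1 / (B + (cmod s)\<^sup>2))"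

lemma curv_spinor_disk: "curv (spinor_disk B s) = B + (cmod s)\<^sup>2"
  by (simp add: spinor_disk_def)

lemma spinor_disk_minus: "spinor_disk B (- s) = spinor_disk B s"
  by (simp add: spinor_disk_def)

lemma is_spin_spinor_disk:
  assumes "B > 0"
  shows "is_spin (Circ 0 (- 1 / B)) (spinor_disk B s) s"
proof -
  define P where "P = B + (cmod s)\<^sup>2"
  have "0 < P"
    using assms by (simp add: P_def add_pos_nonneg)
  with assms have "B * P \<noteq> 0"
    by simp
  moreover have "- 1 / B * (1 / P) = - 1 / (B * P)"
    by simp
  ultimately show ?thesis
    unfolding spinor_disk_def P_def[symmetric] is_spin.simps by (simp add: field_simps)
qed

lemma tangent_major_spinor_disk:
  assumes B: "B > 0" and "s \<noteq> 0"
  shows "tangent (Circ 0 (- 1 / B)) (spinor_disk B s)"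
proof -
  define P where "P = B + (cmod s)\<^sup>2"
  have P: "B < P"
    using \<open>s \<noteq> 0\<close> by (simp add: P_def)
  have "dist (- s\<^sup>2 / of_real (B * P)) 0 = (cmod s)\<^sup>2 / (B * P)"
    using B P by (simp add: norm_divide norm_power norm_mult)
  also have "\<dots> = (P - B) / (B * P)"
    by (simp add: P_def)
  also have "\<dots> = 1 / B - 1 / P"
    using B P by (simp add: field_simps)
  finally have "tangent (Circ (- s\<^sup>2 / of_real (B * P)) (1 / P)) (Circ 0 (- (1 / B)))"
    using B P by (intro tangent_Circ_Circ_internal) (simp_all add: frac_less2)
  then show ?thesis
    by (simp add: spinor_disk_def P_def tangent_sym)
qed

lemma cmod_spinor_centre_diff_sq:
  fixes s t :: complex and B :: real
  defines "P \<equiv> B + (cmod s)\<^sup>2" and "Q \<equiv> B + (cmod t)\<^sup>2"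
  shows "(cmod (s\<^sup>2 * Q - t\<^sup>2 * P))\<^sup>2 = B\<^sup>2 * (P - Q)\<^sup>2 + 4 * P * Q * (Im (cnj s * t))\<^sup>2"
  unfolding P_def Q_def cmod_power2 by (simp add: power2_eq_square) algebra

lemma tangent_spinor_disks:
  assumes B: "B > 0" and cross: "(Im (cnj s * t))\<^sup>2 = B\<^sup>2"
  shows "tangent (spinor_disk B s) (spinor_disk B t)"
proof -
  define P Q where "P = B + (cmod s)\<^sup>2" and "Q = B + (cmod t)\<^sup>2"
  have PQ: "0 < P" "0 < Q"
    using B by (simp_all add: P_def Q_def add_pos_nonneg)
  have "(cmod (s\<^sup>2 * Q - t\<^sup>2 * P))\<^sup>2 = B\<^sup>2 * (P - Q)\<^sup>2 + 4 * P * Q * (Im (cnj s * t))\<^sup>2"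
    unfolding P_def Q_def by (rule cmod_spinor_centre_diff_sq)
  also have "\<dots> = (B * (P + Q))\<^sup>2"
    unfolding cross by (simp add: power2_eq_square algebra_simps)
  finally have "cmod (s\<^sup>2 * Q - t\<^sup>2 * P) = B * (P + Q)"
    using B PQ by (simp add: power2_eq_iff_nonneg)
  moreover have "- s\<^sup>2 / of_real (B * P) - - t\<^sup>2 / of_real (B * Q)
      = - (s\<^sup>2 * Q - t\<^sup>2 * P) / of_real (B * P * Q)"
    using B PQ by (simp add: field_simps)
  ultimately have "dist (- s\<^sup>2 / of_real (B * P)) (- t\<^sup>2 / of_real (B * Q)) = 1 / P + 1 / Q"
    using B PQ by (simp add: dist_norm norm_divide norm_mult norm_minus_commute field_simps)
  then have "tangent (Circ (- s\<^sup>2 / of_real (B * P)) (1 / P)) (Circ (- t\<^sup>2 / of_real (B * Q)) (1 / Q))"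
    using PQ by (intro tangent_Circ_Circ_external) simp_all
  then show ?thesis
    by (simp add: spinor_disk_def P_def Q_def)
qed

lemma spinor_disk_inj:
  assumes "B > 0" and "spinor_disk B s = spinor_disk B t"
  shows "s = t \<or> s = - t"
proof -
  define P Q where "P = B + (cmod s)\<^sup>2" and "Q = B + (cmod t)\<^sup>2"
  have "0 < P"
    using \<open>B > 0\<close> by (simp add: P_def add_pos_nonneg)
  have eq: "Circ (- s\<^sup>2 / of_real (B * P)) (1 / P) = Circ (- t\<^sup>2 / of_real (B * Q)) (1 / Q)"
    using assms(2) by (simp only: spinor_disk_def P_def Q_def)
  then have "P = Q"
    by simp
  moreover have "- s\<^sup>2 / of_real (B * P) = - t\<^sup>2 / of_real (B * Q)"
    using eq by (metis gdisk.inject(1))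
  ultimately have "s\<^sup>2 = t\<^sup>2"
    using \<open>B > 0\<close> \<open>0 < P\<close> by (simp del: of_real_mult)
  then show ?thesis
    by (simp add: power2_eq_iff)
qed

section \<open>Disks indexed by integral spinors\<close>

lemma vcross_vlin: "vcross (vlin \<alpha> \<beta> a b) (vlin \<gamma> \<delta> a b) = (\<alpha> * \<delta> - \<beta> * \<gamma>) * vcross a b"
  by (cases a; cases b) (simp add: algebra_simps)

lemma vlin_1_0 [simp]: "vlin 1 0 a b = a"
  and vlin_0_1 [simp]: "vlin 0 1 a b = b"
  by (cases a; cases b; simp)+

lemma vnorm2_vlin_1_1: "vnorm2 (vlin 1 1 a b) = vnorm2 a + vnorm2 b + 2 * vdot a b"
  and vnorm2_vlin_1_minus1: "vnorm2 (vlin 1 (- 1) a b) = vnorm2 a + vnorm2 b - 2 * vdot a b"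
  by (cases a; cases b; simp add: vnorm2_def algebra_simps)+

lemma vlin_minus: "vlin (- \<alpha>) (- \<beta>) a b = - vlin \<alpha> \<beta> a b"
  by (cases a; cases b) simp

lemma vcomplex_minus: "vcomplex (- v) = - vcomplex v"
  by (cases v) (simp add: complex_eq_iff)

lemma vcomplex_eq_0_iff: "vcomplex v = 0 \<longleftrightarrow> v = 0"
  by (cases v) (simp add: complex_eq_iff zero_prod_def)

lemma cmod_vcomplex_sq: "(cmod (vcomplex v))\<^sup>2 = of_int (vnorm2 v)"
  by (cases v) (simp add: cmod_power2 vnorm2_def flip: power2_eq_square)

lemma Im_cnj_vcomplex: "Im (cnj (vcomplex v) * vcomplex w) = of_int (vcross v w)"
  by (cases v; cases w) (simp add: algebra_simps)

lemma apoll_configs_swap23: "(A, B, C, D) \<in> apoll_configs q \<Longrightarrow> (A, C, B, D) \<in> apoll_configs q"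
  and apoll_configs_swap34: "(A, B, C, D) \<in> apoll_configs q \<Longrightarrow> (A, B, D, C) \<in> apoll_configs q"
  by (meson apoll_configs.rot apoll_configs.swap)+

locale spinor_frame =
  fixes a b :: "int \<times> int"
  assumes vcross_nonzero: "vcross a b \<noteq> 0"
begin

definition major_disk :: gdisk where
  "major_disk = Circ 0 (- 1 / of_int \<bar>vcross a b\<bar>)"

definition lattice_disk :: "int \<Rightarrow> int \<Rightarrow> gdisk" where
  "lattice_disk \<alpha> \<beta> = spinor_disk (of_int \<bar>vcross a b\<bar>) (vcomplex (vlin \<alpha> \<beta> a b))"

definition seed :: "gdisk \<times> gdisk \<times> gdisk \<times> gdisk" where
  "seed = (major_disk, lattice_disk 1 0, lattice_disk 0 1, lattice_disk 1 1)"

lemma abs_vcross_pos: "(0 :: real) < of_int \<bar>vcross a b\<bar>"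
  using vcross_nonzero by simp

lemma curv_major_disk: "curv major_disk = of_int (- \<bar>vcross a b\<bar>)"
  using vcross_nonzero by (simp add: major_disk_def)

lemma curv_lattice_disk: "curv (lattice_disk \<alpha> \<beta>) = of_int (\<bar>vcross a b\<bar> + vnorm2 (vlin \<alpha> \<beta> a b))"
  by (simp add: lattice_disk_def curv_spinor_disk cmod_vcomplex_sq)

lemma lattice_disk_minus: "lattice_disk (- \<alpha>) (- \<beta>) = lattice_disk \<alpha> \<beta>"
  by (simp add: lattice_disk_def vlin_minus vcomplex_minus spinor_disk_minus)

lemma is_spin_major_lattice_disk:
  "is_spin major_disk (lattice_disk \<alpha> \<beta>) (vcomplex (vlin \<alpha> \<beta> a b))"
  unfolding major_disk_def lattice_disk_def by (rule is_spin_spinor_disk[OF abs_vcross_pos])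

lemma vlin_eq_0_iff: "vlin \<alpha> \<beta> a b = 0 \<longleftrightarrow> \<alpha> = 0 \<and> \<beta> = 0"
proof
  assume "vlin \<alpha> \<beta> a b = 0"
  then have "vcross (vlin \<alpha> \<beta> a b) (vlin 0 1 a b) = 0" "vcross (vlin 1 0 a b) (vlin \<alpha> \<beta> a b) = 0"
    by (cases a; cases b; simp add: zero_prod_def)+
  then show "\<alpha> = 0 \<and> \<beta> = 0"
    unfolding vcross_vlin using vcross_nonzero by simp
qed (cases a; cases b; simp add: zero_prod_def)

lemma tangent_major_lattice_disk: "\<alpha> \<noteq> 0 \<or> \<beta> \<noteq> 0 \<Longrightarrow> tangent major_disk (lattice_disk \<alpha> \<beta>)"
  unfolding major_disk_def lattice_disk_def
  by (intro tangent_major_spinor_disk abs_vcross_pos) (simp add: vcomplex_eq_0_iff vlin_eq_0_iff)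

lemma tangent_lattice_disks:
  assumes "\<bar>vcross (vlin \<alpha> \<beta> a b) (vlin \<gamma> \<delta> a b)\<bar> = \<bar>vcross a b\<bar>"
  shows "tangent (lattice_disk \<alpha> \<beta>) (lattice_disk \<gamma> \<delta>)"
  unfolding lattice_disk_def
proof (intro tangent_spinor_disks abs_vcross_pos)
  have "(of_int (vcross (vlin \<alpha> \<beta> a b) (vlin \<gamma> \<delta> a b)))\<^sup>2 = (of_int \<bar>vcross a b\<bar> :: real)\<^sup>2"
    using assms by (metis of_int_abs power2_abs)
  then show "(Im (cnj (vcomplex (vlin \<alpha> \<beta> a b)) * vcomplex (vlin \<gamma> \<delta> a b)))\<^sup>2
      = (of_int \<bar>vcross a b\<bar>)\<^sup>2"
    by (simp only: Im_cnj_vcomplex)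
qed

lemma tangent_lattice_disks_unimodular:
  "\<bar>\<alpha> * \<delta> - \<beta> * \<gamma>\<bar> = 1 \<Longrightarrow> tangent (lattice_disk \<alpha> \<beta>) (lattice_disk \<gamma> \<delta>)"
  by (rule tangent_lattice_disks) (simp add: vcross_vlin abs_mult)

lemma lattice_disk_neq:
  assumes "\<alpha> * \<delta> - \<beta> * \<gamma> \<noteq> 0"
  shows "lattice_disk \<alpha> \<beta> \<noteq> lattice_disk \<gamma> \<delta>"
proof
  assume "lattice_disk \<alpha> \<beta> = lattice_disk \<gamma> \<delta>"
  then have "vcomplex (vlin \<alpha> \<beta> a b) = vcomplex (vlin \<gamma> \<delta> a b) \<or>
      vcomplex (vlin \<alpha> \<beta> a b) = - vcomplex (vlin \<gamma> \<delta> a b)"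
    unfolding lattice_disk_def using spinor_disk_inj[OF abs_vcross_pos] by blast
  then have "(of_int (vcross (vlin \<alpha> \<beta> a b) (vlin \<gamma> \<delta> a b)) :: real) = 0"
    unfolding Im_cnj_vcomplex [symmetric] by (auto simp: mult.commute)
  then have "vcross (vlin \<alpha> \<beta> a b) (vlin \<gamma> \<delta> a b) = 0"
    by (simp only: of_int_eq_0_iff)
  with assms vcross_nonzero show False
    by (simp add: vcross_vlin)
qed

lemma descartes_lattice_disks:
  assumes "\<bar>\<alpha> * \<delta> - \<beta> * \<gamma>\<bar> = 1" "\<bar>\<alpha> * \<mu> - \<beta> * \<kappa>\<bar> = 1" "\<bar>\<gamma> * \<mu> - \<delta> * \<kappa>\<bar> = 1"
  shows "descartes major_disk (lattice_disk \<alpha> \<beta>) (lattice_disk \<gamma> \<delta>) (lattice_disk \<kappa> \<mu>)"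
proof -
  have "\<alpha> \<noteq> 0 \<or> \<beta> \<noteq> 0" "\<gamma> \<noteq> 0 \<or> \<delta> \<noteq> 0" "\<kappa> \<noteq> 0 \<or> \<mu> \<noteq> 0"
    using assms by auto
  then show ?thesis
    unfolding descartes_def tricycle_def
    using assms by (simp add: tangent_major_lattice_disk tangent_lattice_disks_unimodular)
qed

lemma everted_lattice_disks:
  assumes "\<bar>\<alpha> * \<delta> - \<beta> * \<gamma>\<bar> = 1" "\<bar>\<alpha> * \<mu> - \<beta> * \<kappa>\<bar> = 1" "\<bar>\<gamma> * \<mu> - \<delta> * \<kappa>\<bar> = 1"
  shows "everted major_disk (lattice_disk \<alpha> \<beta>) (lattice_disk \<gamma> \<delta>) (lattice_disk \<kappa> \<mu>)"
  using descartes_lattice_disks[OF assms] by (simp add: everted_def curv_major_disk)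

lemma tangent_major_lattice_disk_coprime: "coprime \<alpha> \<beta> \<Longrightarrow> tangent major_disk (lattice_disk \<alpha> \<beta>)"
  by (rule tangent_major_lattice_disk) auto

lemma tricycle_major_lattice_disks:
  assumes "coprime \<alpha> \<beta>" "coprime \<gamma> \<delta>"
    and "\<bar>vcross (vlin \<alpha> \<beta> a b) (vlin \<gamma> \<delta> a b)\<bar> = \<bar>vcross a b\<bar>"
  shows "tricycle major_disk (lattice_disk \<alpha> \<beta>) (lattice_disk \<gamma> \<delta>)"
  using assms by (simp add: tricycle_def tangent_major_lattice_disk_coprime tangent_lattice_disks)

definition reachable_pair :: "int \<Rightarrow> int \<Rightarrow> int \<Rightarrow> int \<Rightarrow> bool" where
  "reachable_pair \<alpha> \<beta> \<gamma> \<delta> \<longleftrightarrow>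
     (major_disk, lattice_disk \<alpha> \<beta>, lattice_disk \<gamma> \<delta>, lattice_disk (\<alpha> + \<gamma>) (\<beta> + \<delta>)) \<in> apoll_configs seed \<and>
     (major_disk, lattice_disk \<alpha> \<beta>, lattice_disk \<gamma> \<delta>, lattice_disk (\<alpha> - \<gamma>) (\<beta> - \<delta>)) \<in> apoll_configs seed"

lemma reachable_pair_swap: "reachable_pair \<alpha> \<beta> \<gamma> \<delta> \<Longrightarrow> reachable_pair \<gamma> \<delta> \<alpha> \<beta>"
  unfolding reachable_pair_def
  using apoll_configs_swap23 lattice_disk_minus[of "\<alpha> - \<gamma>" "\<beta> - \<delta>"]
  by (simp add: add.commute)

lemma reachable_pair_minus: "reachable_pair \<alpha> \<beta> \<gamma> \<delta> \<Longrightarrow> reachable_pair \<alpha> \<beta> (- \<gamma>) (- \<delta>)"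
  unfolding reachable_pair_def lattice_disk_minus by auto

lemma reachable_pair_minus_left: "reachable_pair \<alpha> \<beta> \<gamma> \<delta> \<Longrightarrow> reachable_pair (- \<alpha>) (- \<beta>) \<gamma> \<delta>"
  by (rule reachable_pair_swap[OF reachable_pair_minus[OF reachable_pair_swap]])

lemma reachable_pair_add:
  assumes unimod: "\<bar>\<alpha> * \<delta> - \<beta> * \<gamma>\<bar> = 1" and reach: "reachable_pair \<alpha> \<beta> \<gamma> \<delta>"
  shows "reachable_pair \<alpha> \<beta> (\<alpha> + \<gamma>) (\<beta> + \<delta>)"
proof -
  have old: "(major_disk, lattice_disk \<alpha> \<beta>, lattice_disk (\<alpha> + \<gamma>) (\<beta> + \<delta>), lattice_disk \<gamma> \<delta>)
      \<in> apoll_configs seed"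
    using reach by (simp add: reachable_pair_def apoll_configs_swap34)
  have "descartes major_disk (lattice_disk \<alpha> \<beta>) (lattice_disk (\<alpha> + \<gamma>) (\<beta> + \<delta>))
      (lattice_disk (2 * \<alpha> + \<gamma>) (2 * \<beta> + \<delta>))"
    using unimod by (intro descartes_lattice_disks) (simp_all add: algebra_simps abs_minus_commute)
  moreover have "lattice_disk (2 * \<alpha> + \<gamma>) (2 * \<beta> + \<delta>) \<noteq> lattice_disk \<gamma> \<delta>"
    using unimod by (intro lattice_disk_neq) (auto simp: algebra_simps)
  ultimately have "(major_disk, lattice_disk \<alpha> \<beta>, lattice_disk (\<alpha> + \<gamma>) (\<beta> + \<delta>),
      lattice_disk (2 * \<alpha> + \<gamma>) (2 * \<beta> + \<delta>)) \<in> apoll_configs seed"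
    by (rule apoll_configs.flip[OF old])
  with old show ?thesis
    using lattice_disk_minus[of \<gamma> \<delta>] by (simp add: reachable_pair_def algebra_simps mult_2)
qed

lemma reachable_pair_1_0_0_1: "reachable_pair 1 0 0 1"
proof -
  have seed: "(major_disk, lattice_disk 1 0, lattice_disk 0 1, lattice_disk 1 1) \<in> apoll_configs seed"
    unfolding seed_def[symmetric] by (rule apoll_configs.start)
  have "descartes major_disk (lattice_disk 1 0) (lattice_disk 0 1) (lattice_disk 1 (- 1))"
    by (rule descartes_lattice_disks) simp_all
  moreover have "lattice_disk 1 (- 1) \<noteq> lattice_disk 1 1"
    by (rule lattice_disk_neq) simp
  ultimately have "(major_disk, lattice_disk 1 0, lattice_disk 0 1, lattice_disk 1 (- 1)) \<in> apoll_configs seed"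
    by (rule apoll_configs.flip[OF seed])
  with seed show ?thesis
    by (simp add: reachable_pair_def)
qed

lemma reachable_pair_add_left:
  assumes "\<bar>\<alpha> * \<delta> - \<beta> * \<gamma>\<bar> = 1" "reachable_pair \<alpha> \<beta> \<gamma> \<delta>"
  shows "reachable_pair (\<alpha> + \<gamma>) (\<beta> + \<delta>) \<gamma> \<delta>"
proof -
  have "\<bar>\<gamma> * \<beta> - \<delta> * \<alpha>\<bar> = 1"
    using assms(1) by (simp add: abs_minus_commute mult.commute)
  from reachable_pair_add[OF this reachable_pair_swap[OF assms(2)]]
  show ?thesis
    by (simp add: reachable_pair_swap add.commute)
qed

lemma reachable_pair_diff_left:
  assumes "\<bar>\<alpha> * \<delta> - \<beta> * \<gamma>\<bar> = 1" "reachable_pair \<alpha> \<beta> \<gamma> \<delta>"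
  shows "reachable_pair (\<alpha> - \<gamma>) (\<beta> - \<delta>) \<gamma> \<delta>"
proof -
  have "reachable_pair (\<alpha> + - \<gamma>) (\<beta> + - \<delta>) (- \<gamma>) (- \<delta>)"
    using assms by (intro reachable_pair_add_left reachable_pair_minus) (simp_all add: abs_minus_commute)
  then show ?thesis
    using reachable_pair_minus by fastforce
qed

lemma reachable_pair_shift:
  assumes unimod: "\<bar>\<alpha> * \<delta> - \<beta> * \<gamma>\<bar> = 1" and "reachable_pair \<alpha> \<beta> \<gamma> \<delta>"
  shows "reachable_pair (\<alpha> + k * \<gamma>) (\<beta> + k * \<delta>) \<gamma> \<delta>"
proof (induction k rule: int_induct[where k = 0])
  case base
  show ?case using assms(2) by simp
next
  case (step1 i)
  have "\<bar>(\<alpha> + i * \<gamma>) * \<delta> - (\<beta> + i * \<delta>) * \<gamma>\<bar> = 1"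
    using unimod by (simp add: algebra_simps)
  from reachable_pair_add_left[OF this step1(2)] show ?case
    by (simp add: algebra_simps)
next
  case (step2 i)
  have "\<bar>(\<alpha> + i * \<gamma>) * \<delta> - (\<beta> + i * \<delta>) * \<gamma>\<bar> = 1"
    using unimod by (simp add: algebra_simps)
  from reachable_pair_diff_left[OF this step2(2)] show ?case
    by (simp add: algebra_simps)
qed

text \<open>Euclid's algorithm on the first coordinates: reduce \<open>\<alpha>\<close> modulo
  \<open>\<gamma>\<close> and swap the pair.\<close>
lemma reachable_pair_unimodular: "\<bar>\<alpha> * \<delta> - \<beta> * \<gamma>\<bar> = 1 \<Longrightarrow> reachable_pair \<alpha> \<beta> \<gamma> \<delta>"
proof (induction "nat \<bar>\<gamma>\<bar>" arbitrary: \<alpha> \<beta> \<gamma> \<delta> rule: less_induct)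
  case (less \<gamma> \<alpha> \<beta> \<delta>)
  show ?case
  proof (cases "\<gamma> = 0")
    case True
    with less.prems have "\<bar>\<alpha> * \<delta>\<bar> = 1"
      by simp
    then have "\<alpha> = 1 \<or> \<alpha> = - 1" "\<delta> = 1 \<or> \<delta> = - 1"
      using abs_zmult_eq_1[of \<alpha> \<delta>] abs_zmult_eq_1[of \<delta> \<alpha>] by (auto simp: mult.commute)
    then have "reachable_pair \<alpha> 0 0 \<delta>" and "\<delta> * \<delta> = 1"
      using reachable_pair_1_0_0_1 reachable_pair_minus[of 1 0 0 1] reachable_pair_minus_left[of 1 0 0 \<delta>]
      by auto
    with reachable_pair_shift[of \<alpha> \<delta> 0 0 "\<beta> * \<delta>"] \<open>\<bar>\<alpha> * \<delta>\<bar> = 1\<close> True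
    show ?thesis
      by (simp add: mult.assoc)
  next
    case False
    define k where "k = \<alpha> div \<gamma>"
    have mod: "\<alpha> mod \<gamma> = \<alpha> - k * \<gamma>"
      by (simp add: k_def minus_div_mult_eq_mod)
    have "\<gamma> * (\<beta> - k * \<delta>) - \<delta> * (\<alpha> - k * \<gamma>) = - (\<alpha> * \<delta> - \<beta> * \<gamma>)"
      by (simp add: algebra_simps)
    then have "\<bar>\<gamma> * (\<beta> - k * \<delta>) - \<delta> * (\<alpha> mod \<gamma>)\<bar> = 1"
      using less.prems unfolding mod by simp
    moreover have "nat \<bar>\<alpha> mod \<gamma>\<bar> < nat \<bar>\<gamma>\<bar>"
      using abs_mod_less[of \<gamma> \<alpha>] False by simp
    ultimately have "reachable_pair (\<alpha> mod \<gamma>) (\<beta> - k * \<delta>) \<gamma> \<delta>"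
      using less.hyps reachable_pair_swap by blast
    from reachable_pair_shift[OF _ this, of k] less.prems mod
    show ?thesis
      by (simp add: algebra_simps)
  qed
qed

lemma lattice_disk_in_packing:
  assumes "coprime \<alpha> \<beta>"
  shows "lattice_disk \<alpha> \<beta> \<in> apollonian_packing seed"
proof -
  obtain u v where "u * \<alpha> + v * \<beta> = gcd \<alpha> \<beta>"
    using bezout_int by blast
  with assms have "\<bar>\<alpha> * u - \<beta> * (- v)\<bar> = 1"
    by (simp add: coprime_iff_gcd_eq_1 algebra_simps)
  then have "reachable_pair \<alpha> \<beta> (- v) u"
    by (rule reachable_pair_unimodular)
  then show ?thesis
    unfolding reachable_pair_def apollonian_packing_def by blast
qed

lemma integral_descartes_seed: "integral_descartes seed"
proof -
  have "descartes major_disk (lattice_disk 1 0) (lattice_disk 0 1) (lattice_disk 1 1)"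
    by (rule descartes_lattice_disks) simp_all
  then show ?thesis
    by (simp add: integral_descartes_def seed_def curv_major_disk curv_lattice_disk)
qed

end

theorem proposition3p2:
  fixes a b :: "int \<times> int"
  assumes nondeg: "vcross a b \<noteq> 0"
  defines "B \<equiv> \<bar>vcross a b\<bar>"
  shows "\<exists>D0 D1 D2 D3 D4.
     descartes D0 D1 D2 D3 \<and> everted D0 D1 D2 D3 \<and>
     curv D0 = of_int (- B) \<and>
     curv D1 = of_int (B + vnorm2 a) \<and>
     curv D2 = of_int (B + vnorm2 b) \<and>
     curv D3 = of_int (B + vnorm2 a + vnorm2 b + 2 * vdot a b) \<and>
     descartes D0 D1 D2 D4 \<and> everted D0 D1 D2 D4 \<and>
     curv D4 = of_int (B + vnorm2 a + vnorm2 b - 2 * vdot a b) \<and>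
     is_spin D0 D1 (vcomplex a) \<and> is_spin D0 D2 (vcomplex b) \<and>
     integral_packing (apollonian_packing (D0, D1, D2, D3)) \<and>
     (\<exists>f :: int \<Rightarrow> int \<Rightarrow> gdisk.
        (\<forall>\<alpha> \<beta>. coprime \<alpha> \<beta> \<longrightarrow>
            f \<alpha> \<beta> \<in> apollonian_packing (D0, D1, D2, D3) \<and> tangent D0 (f \<alpha> \<beta>) \<and>
            curv (f \<alpha> \<beta>) = of_int (B + vnorm2 (vlin \<alpha> \<beta> a b))) \<and>
        (\<forall>\<alpha> \<beta> \<gamma> \<delta>. coprime \<alpha> \<beta> \<longrightarrow> coprime \<gamma> \<delta> \<longrightarrow>
            \<bar>vcross (vlin \<alpha> \<beta> a b) (vlin \<gamma> \<delta> a b)\<bar> = B \<longrightarrow>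
            tricycle D0 (f \<alpha> \<beta>) (f \<gamma> \<delta>)))"
proof -
  interpret spinor_frame a b
    by unfold_locales (rule nondeg)
  let ?D1 = "lattice_disk 1 0" and ?D2 = "lattice_disk 0 1"
  have "descartes major_disk ?D1 ?D2 (lattice_disk 1 1)"
    "descartes major_disk ?D1 ?D2 (lattice_disk 1 (- 1))"
    "everted major_disk ?D1 ?D2 (lattice_disk 1 1)"
    "everted major_disk ?D1 ?D2 (lattice_disk 1 (- 1))"
    by (rule descartes_lattice_disks everted_lattice_disks; simp)+
  moreover have "curv major_disk = of_int (- B)" "curv ?D1 = of_int (B + vnorm2 a)"
    "curv ?D2 = of_int (B + vnorm2 b)"
    "curv (lattice_disk 1 1) = of_int (B + vnorm2 a + vnorm2 b + 2 * vdot a b)"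
    "curv (lattice_disk 1 (- 1)) = of_int (B + vnorm2 a + vnorm2 b - 2 * vdot a b)"
    by (simp_all add: B_def curv_major_disk curv_lattice_disk vnorm2_vlin_1_1 vnorm2_vlin_1_minus1
        add.assoc)
  moreover have "is_spin major_disk ?D1 (vcomplex a)" "is_spin major_disk ?D2 (vcomplex b)"
    using is_spin_major_lattice_disk[of 1 0] is_spin_major_lattice_disk[of 0 1] by simp_all
  moreover have "\<forall>\<alpha> \<beta>. coprime \<alpha> \<beta> \<longrightarrow> lattice_disk \<alpha> \<beta> \<in> apollonian_packing seed \<and>
      tangent major_disk (lattice_disk \<alpha> \<beta>) \<and> curv (lattice_disk \<alpha> \<beta>) = of_int (B + vnorm2 (vlin \<alpha> \<beta> a b))"
    by (simp add: B_def lattice_disk_in_packing tangent_major_lattice_disk_coprime curv_lattice_disk)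
  moreover have "\<forall>\<alpha> \<beta> \<gamma> \<delta>. coprime \<alpha> \<beta> \<longrightarrow> coprime \<gamma> \<delta> \<longrightarrow>
      \<bar>vcross (vlin \<alpha> \<beta> a b) (vlin \<gamma> \<delta> a b)\<bar> = B \<longrightarrow>
      tricycle major_disk (lattice_disk \<alpha> \<beta>) (lattice_disk \<gamma> \<delta>)"
    by (simp add: B_def tricycle_major_lattice_disks)
  ultimately show ?thesis
    using integral_packing_apollonian_packing[OF integral_descartes_seed]
    unfolding seed_def by (intro exI conjI) assumption+
qed

end
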